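(* Let $r \geq 2$, let $\mathcal{F}$ be a collection of $r$-uniform hypergraphs, let $0<p<1$, let $\epsilon>0$, and let $c = c(p,\mathcal{F})$. Then there exist $\eta, \gamma, \lambda > 0$, an integer $m$ and $n_0$ (depending only on $\mathcal{F}, p, \epsilon$) such that the following holds. Let $V$ be a vertex set of size $n > n_0$ and let $\mathcal{A}$ be a collection of $r$-uniform hypergraphs on $V$ with $\mu_n(\mathcal{A}) > 2^{(-c+\epsilon)\binom{n}{r}}$. Let $\mathcal{D} = \{D_1,\ldots,D_d\}$ be a partial Steiner system with parameters $(r,m,n)$ on $V$ with $d \geq (1-\lambda)\binom{n}{r}\binom{m}{r}^{-1}$. Let \[ I = \{ i \in [d] : \mu_n(\{G \in \mathcal{A} : \mathcal{F} < G[D_i]\}) \geq \gamma\, \mu_n(\mathcal{A})\}. \] Then $|I| \geq \eta d$.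
   Context: $G(k,p)$ denotes the random $r$-uniform hypergraph on $k$ labelled vertices in which each $r$-subset is an edge independently with probability $p$; for a collection $\mathcal{C}$ of $r$-uniform hypergraphs on a common $k$-vertex set, $\mu_k(\mathcal{C}) = \Pr[G(k,p) \in \mathcal{C}]$. The constant $c(p,\mathcal{F})$ is defined by $\Pr[G(n,p)$ has no induced subgraph isomorphic to a member of $\mathcal{F}] = 2^{(-c+o(1))\binom{n}{r}}$ as $n\to\infty$ (this limit exists). For a hypergraph $G$ and vertex subset $D$, $G[D]$ is the induced subhypergraph on $D$, and $\mathcal{F} < H$ means $H$ contains an induced subgraph isomorphic to a member of $\mathcal{F}$. A partial Steiner system with parameters $(r,m,n)$ on an $n$-set $V$ is a collection $\mathcal{D}$ of $m$-element subsets of $V$ such that every $r$-element subset of $V$ is contained in at most one member of $\mathcal{D}$. *)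

theory Defs
  imports Complex_Main
begin

definition rsets :: "nat \<Rightarrow> 'v set \<Rightarrow> 'v set set" where
  "rsets r V = {S. S \<subseteq> V \<and> card S = r}"

definition hyps :: "nat \<Rightarrow> 'v set \<Rightarrow> 'v set set set" where
  "hyps r V = Pow (rsets r V)"

(* mu_n(A) = Pr[G(V,p) \<in> A], V finite with |V| = n *)
definition mu :: "real \<Rightarrow> nat \<Rightarrow> 'v set \<Rightarrow> 'v set set set \<Rightarrow> real" where
  "mu p r V A = (\<Sum>G\<in>A \<inter> hyps r V. p ^ card G * (1 - p) ^ (card (rsets r V) - card G))"

definition wf_family :: "nat \<Rightarrow> (nat set \<times> nat set set) set \<Rightarrow> bool" where
  "wf_family r F = (\<forall>(W, E)\<in>F. finite W \<and> E \<subseteq> rsets r W)"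

(* F < G[D]: the induced subhypergraph of G on D contains an induced copy of a member of F *)
definition contains_induced ::
  "nat \<Rightarrow> (nat set \<times> nat set set) set \<Rightarrow> 'v set \<Rightarrow> 'v set set \<Rightarrow> bool" where
  "contains_induced r F D G =
     (\<exists>(W, E)\<in>F. \<exists>f. inj_on f W \<and> f ` W \<subseteq> D \<and>
        (\<forall>S. S \<subseteq> W \<and> card S = r \<longrightarrow> (S \<in> E \<longleftrightarrow> f ` S \<in> {e\<in>G. e \<subseteq> D})))"

(* c(p,F): Pr[G(n,p) is F-free] = 2^((-c+o(1)) binom n r) *)
definition cconst :: "real \<Rightarrow> nat \<Rightarrow> (nat set \<times> nat set set) set \<Rightarrow> real" where
  "cconst p r F = lim (\<lambda>n. - log 2 (mu p r {..<n}
       {G \<in> hyps r {..<n}. \<not> contains_induced r F {..<n} G}) / real (n choose r))"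

definition partial_steiner :: "nat \<Rightarrow> nat \<Rightarrow> 'v set \<Rightarrow> 'v set set \<Rightarrow> bool" where
  "partial_steiner r m V \<D> =
     ((\<forall>D\<in>\<D>. D \<subseteq> V \<and> card D = m) \<and>
      (\<forall>S\<in>rsets r V. card {D\<in>\<D>. S \<subseteq> D} \<le> 1))"

end

theory Submission
  imports Defs "HOL-Analysis.Analysis"
begin

text \<open>Let \<open>q(n)\<close> be the probability that \<open>G(n, p)\<close> is \<open>\<F>\<close>-free. A hypergraph on \<open>n + 1\<close>
  vertices is \<open>\<F>\<close>-free only if its \<open>n + 1\<close> vertex-deleted subgraphs are, and every edge lies in
  \<open>n + 1 - r\<close> of them, so Finner's inequality gives \<open>q(n + 1) \<le> q(n) ^ ((n + 1) / (n + 1 - r))\<close>;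
  hence \<open>-log q(n) / (n choose r)\<close> increases to \<open>c\<close>, and we fix \<open>m\<close> with
  \<open>q(m) \<approx> 2 ^ (-c (m choose r))\<close>.

  The blocks of a partial Steiner system share no edges, so the events "\<open>G[D]\<close> is \<open>\<F>\<close>-free" are
  independent, and at least \<open>t\<close> of them occur with probability at most \<open>2 ^ d q(m) ^ t\<close>. If fewer
  than \<open>\<eta> d\<close> blocks were dense, a first moment argument would show that at least half of \<open>\<A>\<close>
  has \<open>t = \<lceil>(1 - \<delta>) d\<rceil>\<close> \<open>\<F>\<close>-free blocks, so \<open>\<mu>(\<A>) \<le> 2 ^ (d + 1) q(m) ^ t\<close>, which is about
  \<open>2 ^ (-c (1 - \<delta>)\<^sup>2 (n choose r))\<close> because \<open>d (m choose r) \<approx> (n choose r)\<close>; this contradicts the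
  lower bound on \<open>\<mu>(\<A>)\<close>. If \<open>q(m) = 0\<close> for some \<open>m\<close>, every block is dense.\<close>

section \<open>Expectations over a p-random subset\<close>

definition rs_weight :: "real \<Rightarrow> 'a set \<Rightarrow> 'a set \<Rightarrow> real" where
  "rs_weight p X G = p ^ card G * (1 - p) ^ (card X - card G)"

definition rs_expect :: "real \<Rightarrow> 'a set \<Rightarrow> ('a set \<Rightarrow> real) \<Rightarrow> real" where
  "rs_expect p X h = (\<Sum>G\<in>Pow X. rs_weight p X G * h G)"

lemma rs_weight_nonneg: "0 \<le> p \<Longrightarrow> p \<le> 1 \<Longrightarrow> 0 \<le> rs_weight p X G"
  by (simp add: rs_weight_def)

lemma rs_weight_pos: "0 < p \<Longrightarrow> p < 1 \<Longrightarrow> 0 < rs_weight p X G"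
  by (simp add: rs_weight_def)

lemma rs_expect_empty [simp]: "rs_expect p {} h = h {}"
  by (simp add: rs_expect_def rs_weight_def)

lemma rs_expect_insert:
  assumes "finite X" "x \<notin> X"
  shows "rs_expect p (insert x X) h = rs_expect p X (\<lambda>G. (1 - p) * h G + p * h (insert x G))"
proof -
  have fin: "finite G" "card G \<le> card X" "x \<notin> G" if "G \<subseteq> X" for G
    using that assms by (auto intro: finite_subset card_mono)
  have weight_out: "rs_weight p (insert x X) G = (1 - p) * rs_weight p X G" if "G \<subseteq> X" for G
    using fin[OF that] assms by (simp add: rs_weight_def Suc_diff_le)
  have weight_in: "rs_weight p (insert x X) (insert x G) = p * rs_weight p X G" if "G \<subseteq> X" for G
    using fin[OF that] assms by (simp add: rs_weight_def)
  have inj: "inj_on (insert x) (Pow X)"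
    using assms by (intro inj_onI) (metis PowD insert_ident subsetD)
  have "rs_expect p (insert x X) h = (\<Sum>G\<in>Pow X. rs_weight p (insert x X) G * h G)
      + (\<Sum>G\<in>Pow X. rs_weight p (insert x X) (insert x G) * h (insert x G))"
    unfolding rs_expect_def Pow_insert using assms inj
    by (subst sum.union_disjoint) (auto simp: sum.reindex)
  also have "\<dots> = rs_expect p X (\<lambda>G. (1 - p) * h G + p * h (insert x G))"
    unfolding rs_expect_def sum.distrib[symmetric]
    by (intro sum.cong) (auto simp: weight_out weight_in algebra_simps)
  finally show ?thesis .
qed

lemma rs_expect_cong: "(\<And>G. G \<subseteq> X \<Longrightarrow> h G = g G) \<Longrightarrow> rs_expect p X h = rs_expect p X g"
  unfolding rs_expect_def by (intro sum.cong) auto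

lemma rs_expect_mono:
  assumes "0 \<le> p" "p \<le> 1" "\<And>G. G \<subseteq> X \<Longrightarrow> h G \<le> g G"
  shows "rs_expect p X h \<le> rs_expect p X g"
  unfolding rs_expect_def using assms by (intro sum_mono mult_left_mono) (auto simp: rs_weight_nonneg)

lemma rs_expect_nonneg:
  "0 \<le> p \<Longrightarrow> p \<le> 1 \<Longrightarrow> (\<And>G. G \<subseteq> X \<Longrightarrow> 0 \<le> h G) \<Longrightarrow> 0 \<le> rs_expect p X h"
  unfolding rs_expect_def by (intro sum_nonneg mult_nonneg_nonneg) (auto simp: rs_weight_nonneg)

lemma rs_expect_cmult: "rs_expect p X (\<lambda>G. c * h G) = c * rs_expect p X h"
  unfolding rs_expect_def by (simp add: sum_distrib_left algebra_simps)

lemma rs_expect_sum: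
  "finite T \<Longrightarrow> rs_expect p X (\<lambda>G. \<Sum>t\<in>T. g t G) = (\<Sum>t\<in>T. rs_expect p X (g t))"
  unfolding rs_expect_def by (simp add: sum_distrib_left sum.swap[of _ T])

lemma rs_expect_const: "finite X \<Longrightarrow> rs_expect p X (\<lambda>_. c) = c"
  by (induction X rule: finite_induct) (simp_all add: rs_expect_insert algebra_simps)

lemma rs_expect_Un:
  assumes "finite Y" "finite Z" "Y \<inter> Z = {}"
  shows "rs_expect p (Y \<union> Z) h = rs_expect p Y (\<lambda>G. rs_expect p Z (\<lambda>H. h (G \<union> H)))"
  using assms(2,3,1)
proof (induction Z arbitrary: h rule: finite_induct)
  case empty
  show ?case by simp
next
  case (insert x Z)
  have "rs_expect p (Y \<union> insert x Z) h
      = rs_expect p (Y \<union> Z) (\<lambda>G. (1 - p) * h G + p * h (insert x G))"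
    using insert by (simp add: rs_expect_insert)
  also have "\<dots> = rs_expect p Y (\<lambda>G. rs_expect p Z (\<lambda>H. (1 - p) * h (G \<union> H) + p * h (G \<union> insert x H)))"
    using insert by simp
  also have "\<dots> = rs_expect p Y (\<lambda>G. rs_expect p (insert x Z) (\<lambda>H. h (G \<union> H)))"
    using insert by (simp add: rs_expect_insert)
  finally show ?case .
qed

lemma rs_expect_restrict:
  assumes "finite X" "Y \<subseteq> X"
  shows "rs_expect p X (\<lambda>G. h (G \<inter> Y)) = rs_expect p Y h"
proof -
  have X: "X = Y \<union> (X - Y)" using assms by auto
  have "rs_expect p X (\<lambda>G. h (G \<inter> Y)) = rs_expect p Y (\<lambda>G. rs_expect p (X - Y) (\<lambda>_. h G))"
    using assms finite_subset
    by (subst X, subst rs_expect_Un) (auto intro!: rs_expect_cong arg_cong[where f=h])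
  then show ?thesis using assms by (simp add: rs_expect_const)
qed

lemma rs_expect_mult_disjoint:
  assumes "finite X" "Y \<subseteq> X" "Z \<subseteq> X" "Y \<inter> Z = {}"
  shows "rs_expect p X (\<lambda>G. f (G \<inter> Y) * g (G \<inter> Z)) = rs_expect p Y f * rs_expect p Z g"
proof -
  have fin: "finite Y" "finite Z" using assms by (auto intro: finite_subset)
  have "rs_expect p X (\<lambda>G. f (G \<inter> Y) * g (G \<inter> Z))
      = rs_expect p X (\<lambda>G. (\<lambda>K. f (K \<inter> Y) * g (K \<inter> Z)) (G \<inter> (Y \<union> Z)))"
    by (intro rs_expect_cong) (simp add: Int_assoc Int_absorb2 inf_sup_absorb)
  also have "\<dots> = rs_expect p (Y \<union> Z) (\<lambda>K. f (K \<inter> Y) * g (K \<inter> Z))"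
    using assms by (intro rs_expect_restrict) auto
  also have "\<dots> = rs_expect p Y (\<lambda>G. rs_expect p Z (\<lambda>H. f ((G \<union> H) \<inter> Y) * g ((G \<union> H) \<inter> Z)))"
    using assms fin by (intro rs_expect_Un)
  also have "\<dots> = rs_expect p Y (\<lambda>G. rs_expect p Z (\<lambda>H. f G * g H))"
  proof (intro rs_expect_cong)
    fix G H assume "G \<subseteq> Y" "H \<subseteq> Z"
    then have "(G \<union> H) \<inter> Y = G" "(G \<union> H) \<inter> Z = H" using assms(4) by auto
    then show "f ((G \<union> H) \<inter> Y) * g ((G \<union> H) \<inter> Z) = f G * g H" by simp
  qed
  also have "\<dots> = rs_expect p Y f * rs_expect p Z g"
    using rs_expect_cmult[of p Y "rs_expect p Z g" f] by (simp add: rs_expect_cmult mult.commute)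
  finally show ?thesis .
qed

lemma rs_expect_prod_disjoint:
  assumes "finite I" "finite X" "\<And>i. i \<in> I \<Longrightarrow> S i \<subseteq> X"
    "\<And>i j. i \<in> I \<Longrightarrow> j \<in> I \<Longrightarrow> i \<noteq> j \<Longrightarrow> S i \<inter> S j = {}"
  shows "rs_expect p X (\<lambda>G. \<Prod>i\<in>I. h i (G \<inter> S i)) = (\<Prod>i\<in>I. rs_expect p (S i) (h i))"
  using assms
proof (induction I arbitrary: X rule: finite_induct)
  case empty
  then show ?case by (simp add: rs_expect_const)
next
  case (insert j I)
  define Z where "Z = (\<Union>i\<in>I. S i)"
  have Z: "Z \<subseteq> X" "S j \<inter> Z = {}"
    using insert.prems(2,3) insert.hyps(2) unfolding Z_def by fastforce+
  have "finite Z" using Z(1) insert.prems(1) by (rule finite_subset)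
  have "rs_expect p X (\<lambda>G. \<Prod>i\<in>insert j I. h i (G \<inter> S i))
      = rs_expect p X (\<lambda>G. h j (G \<inter> S j) * (\<lambda>K. \<Prod>i\<in>I. h i (K \<inter> S i)) (G \<inter> Z))"
  proof (intro rs_expect_cong)
    fix G
    have "\<forall>i\<in>I. G \<inter> S i = G \<inter> Z \<inter> S i" unfolding Z_def by blast
    then have "(\<Prod>i\<in>I. h i (G \<inter> S i)) = (\<Prod>i\<in>I. h i (G \<inter> Z \<inter> S i))"
      by (intro prod.cong refl) auto
    then show "(\<Prod>i\<in>insert j I. h i (G \<inter> S i))
        = h j (G \<inter> S j) * (\<lambda>K. \<Prod>i\<in>I. h i (K \<inter> S i)) (G \<inter> Z)"
      using insert by simp
  qed
  also have "\<dots> = rs_expect p (S j) (h j) * rs_expect p Z (\<lambda>K. \<Prod>i\<in>I. h i (K \<inter> S i))"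
    using insert.prems(1,2) Z by (intro rs_expect_mult_disjoint) auto
  also have "rs_expect p Z (\<lambda>K. \<Prod>i\<in>I. h i (K \<inter> S i)) = (\<Prod>i\<in>I. rs_expect p (S i) (h i))"
    using insert.prems \<open>finite Z\<close> by (intro insert.IH) (auto simp: Z_def)
  finally show ?case using insert by simp
qed

lemma rs_expect_image:
  assumes "inj_on g Y" "finite Y"
  shows "rs_expect p (g ` Y) h = rs_expect p Y (\<lambda>H. h (g ` H))"
proof -
  have Pow_image: "Pow (g ` Y) = image g ` Pow Y" by (simp add: image_Pow_surj)
  have inj: "inj_on (image g) (Pow Y)" by (rule inj_on_image_Pow[OF assms(1)])
  have "rs_weight p (g ` Y) (g ` H) = rs_weight p Y H" if "H \<subseteq> Y" for H
    using assms that by (simp add: rs_weight_def card_image inj_on_subset)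
  then show ?thesis
    unfolding rs_expect_def Pow_image using inj by (simp add: sum.reindex)
qed

section \<open>Finner's inequality\<close>

lemma prod_le_mean_of_powers:
  fixes t :: "'a \<Rightarrow> real"
  assumes "finite J" "card J = k" "k > 0" "\<And>j. j \<in> J \<Longrightarrow> 0 \<le> t j"
  shows "(\<Prod>j\<in>J. t j) \<le> (\<Sum>j\<in>J. t j ^ k) / k"
proof -
  have "J \<noteq> {}" using assms by auto
  then have "(\<Prod>j\<in>J. t j ^ k) powr (1 / card J) \<le> (\<Sum>j\<in>J. t j ^ k / card J)"
    using arith_geom_mean[OF assms(1), of "\<lambda>j. t j ^ k"] assms(4) by simp
  moreover have "(\<Prod>j\<in>J. t j ^ k) = (\<Prod>j\<in>J. t j) ^ k" by (simp add: prod_power_distrib)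
  moreover have P: "0 \<le> (\<Prod>j\<in>J. t j)" using assms(4) by (simp add: prod_nonneg)
  moreover have "((\<Prod>j\<in>J. t j) ^ k) powr (1 / k) = (\<Prod>j\<in>J. t j)"
    using P assms(3) by (simp add: root_powr_inverse[symmetric] real_root_power_cancel)
  ultimately show ?thesis using assms(2) by (simp add: sum_divide_distrib)
qed

text \<open>After dividing by the right-hand side, this is AM-GM applied to each of the two products.\<close>

lemma holder_two_point:
  fixes u v :: "'a \<Rightarrow> real"
  assumes "finite J" "card J = k" "k > 0" "0 \<le> a" "0 \<le> b"
    "\<And>j. j \<in> J \<Longrightarrow> 0 \<le> u j" "\<And>j. j \<in> J \<Longrightarrow> 0 \<le> v j"
  shows "a * (\<Prod>j\<in>J. u j) + b * (\<Prod>j\<in>J. v j) \<le> (\<Prod>j\<in>J. root k (a * u j ^ k + b * v j ^ k))"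
proof -
  define s where "s j = root k (a * u j ^ k + b * v j ^ k)" for j
  have s0: "0 \<le> s j" if "j \<in> J" for j
    unfolding s_def using assms that by (intro real_root_ge_zero) auto
  have sk: "s j ^ k = a * u j ^ k + b * v j ^ k" if "j \<in> J" for j
    unfolding s_def using assms that by simp
  show ?thesis
  proof (cases "\<exists>j\<in>J. s j = 0")
    case True
    then obtain j where j: "j \<in> J" "s j = 0" by blast
    then have "a * u j ^ k + b * v j ^ k = 0" using sk assms(3) by (metis zero_power gr_implies_not0)
    moreover have "0 \<le> a * u j ^ k" "0 \<le> b * v j ^ k" using assms j by auto
    ultimately have "a * u j ^ k = 0" "b * v j ^ k = 0" by linarith+
    then have "a * u j = 0" "b * v j = 0" using assms(3) by auto
    moreover have "a * (\<Prod>j\<in>J. u j) = a * u j * (\<Prod>i\<in>J-{j}. u i)"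
      "b * (\<Prod>j\<in>J. v j) = b * v j * (\<Prod>i\<in>J-{j}. v i)"
      using j assms(1) by (simp_all add: prod.remove)
    ultimately have "a * (\<Prod>j\<in>J. u j) + b * (\<Prod>j\<in>J. v j) = 0"
      by (metis add.right_neutral mult_zero_left)
    moreover have "0 \<le> (\<Prod>j\<in>J. s j)" using s0 by (simp add: prod_nonneg)
    ultimately show ?thesis unfolding s_def by simp
  next
    case False
    then have spos: "0 < s j" if "j \<in> J" for j using s0[OF that] that by force
    have "a * (\<Prod>j\<in>J. u j / s j) + b * (\<Prod>j\<in>J. v j / s j) \<le>
          a * ((\<Sum>j\<in>J. (u j / s j) ^ k) / k) + b * ((\<Sum>j\<in>J. (v j / s j) ^ k) / k)"
      using assms spos
      by (intro add_mono mult_left_mono prod_le_mean_of_powers) (auto intro!: divide_nonneg_pos)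
    also have "\<dots> = (\<Sum>j\<in>J. (a * u j ^ k + b * v j ^ k) / s j ^ k) / k"
      by (simp add: sum_divide_distrib sum_distrib_left sum.distrib[symmetric] power_divide
          add_divide_distrib)
    also have "\<dots> = (\<Sum>j\<in>J. 1) / k"
      using sk spos by (intro arg_cong[where f="\<lambda>x. x / k"] sum.cong refl)
        (metis div_self less_numeral_extra(3) power_not_zero)
    also have "\<dots> = 1" using assms(2,3) by simp
    finally have "(a * (\<Prod>j\<in>J. u j) + b * (\<Prod>j\<in>J. v j)) / (\<Prod>j\<in>J. s j) \<le> 1"
      by (simp add: prod_dividef add_divide_distrib)
    then show ?thesis using spos unfolding s_def by (simp add: divide_le_eq prod_pos)
  qed
qed

lemma holder_two_point_subfamily:
  fixes u v :: "'a \<Rightarrow> real"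
  assumes "finite I" "J \<subseteq> I" "card J = k" "k > 0" "0 \<le> a" "0 \<le> b"
    "\<And>i. i \<in> I \<Longrightarrow> 0 \<le> u i" "\<And>i. i \<in> I \<Longrightarrow> 0 \<le> v i" "\<And>i. i \<in> I - J \<Longrightarrow> u i = v i"
  shows "a * (\<Prod>i\<in>I. u i) + b * (\<Prod>i\<in>I. v i)
    \<le> (\<Prod>i\<in>I. if i \<in> J then root k (a * u i ^ k + b * v i ^ k) else u i)"
proof -
  have J: "finite J" using assms(1,2) finite_subset by blast
  define C where "C = (\<Prod>i\<in>I-J. u i)"
  have "a * (\<Prod>j\<in>J. u j) + b * (\<Prod>j\<in>J. v j) \<le> (\<Prod>j\<in>J. root k (a * u j ^ k + b * v j ^ k))"
    using assms J by (intro holder_two_point) auto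
  moreover have "0 \<le> C" unfolding C_def using assms(7) by (auto intro: prod_nonneg)
  ultimately have "C * (a * (\<Prod>j\<in>J. u j) + b * (\<Prod>j\<in>J. v j))
      \<le> C * (\<Prod>j\<in>J. root k (a * u j ^ k + b * v j ^ k))"
    by (rule mult_left_mono)
  moreover have "(\<Prod>i\<in>I. w i) = (\<Prod>i\<in>I-J. w i) * (\<Prod>i\<in>J. w i)" for w :: "'a \<Rightarrow> real"
    using prod.subset_diff[OF assms(2,1)] by simp
  moreover have "(\<Prod>i\<in>I-J. v i) = C" "(\<Prod>i\<in>I-J. if i \<in> J then root k (a * u i ^ k + b * v i ^ k) else u i) = C"
    unfolding C_def using assms(9) by (auto intro: prod.cong)
  moreover have "(\<Prod>i\<in>J. if i \<in> J then root k (a * u i ^ k + b * v i ^ k) else u i)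
      = (\<Prod>j\<in>J. root k (a * u j ^ k + b * v j ^ k))"
    by (intro prod.cong) auto
  ultimately show ?thesis by (simp add: C_def algebra_simps)
qed

text \<open>The induction removes one point \<open>x\<close> of \<open>X\<close> and absorbs it, by Hoelder's inequality, into
  the \<open>k\<close> factors whose sets contain \<open>x\<close>.\<close>

lemma rs_expect_prod_le_finner:
  assumes "finite X" "finite I" "0 \<le> p" "p \<le> 1" "k > 0"
    "\<And>i. i \<in> I \<Longrightarrow> S i \<subseteq> X"
    "\<And>x. x \<in> X \<Longrightarrow> card {i\<in>I. x \<in> S i} = k"
    "\<And>i H. i \<in> I \<Longrightarrow> 0 \<le> f i H"
  shows "rs_expect p X (\<lambda>G. \<Prod>i\<in>I. f i (G \<inter> S i))
    \<le> (\<Prod>i\<in>I. root k (rs_expect p (S i) (\<lambda>H. f i H ^ k)))"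
  using assms(1,6,7,8)
proof (induction X arbitrary: S f rule: finite_induct)
  case empty
  then have "S i = {}" if "i \<in> I" for i using that by blast
  then show ?case using empty.prems(3) assms(5) by (simp add: real_root_power_cancel)
next
  case (insert x X)
  define J where "J = {i\<in>I. x \<in> S i}"
  define S' where "S' i = S i - {x}" for i
  define f' where "f' i H = (if i \<in> J then root k ((1 - p) * f i H ^ k + p * f i (insert x H) ^ k)
    else f i H)" for i H
  have J: "J \<subseteq> I" "card J = k" unfolding J_def using insert.prems(2) by auto
  have "rs_expect p (insert x X) (\<lambda>G. \<Prod>i\<in>I. f i (G \<inter> S i))
      = rs_expect p X (\<lambda>G. (1 - p) * (\<Prod>i\<in>I. f i (G \<inter> S i)) + p * (\<Prod>i\<in>I. f i (insert x G \<inter> S i)))"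
    using insert by (simp add: rs_expect_insert)
  also have "\<dots> \<le> rs_expect p X (\<lambda>G. \<Prod>i\<in>I. f' i (G \<inter> S' i))"
  proof (intro rs_expect_mono assms(3,4))
    fix G assume "G \<subseteq> X"
    then have "x \<notin> G" using insert.hyps(2) by auto
    then have G_S: "G \<inter> S i = G \<inter> S' i" and insert_S: "insert x G \<inter> S i
        = (if i \<in> J then insert x (G \<inter> S' i) else G \<inter> S' i)" if "i \<in> I" for i
      using that unfolding S'_def J_def by auto
    have "(1 - p) * (\<Prod>i\<in>I. f i (G \<inter> S' i)) + p * (\<Prod>i\<in>I. f i (insert x G \<inter> S i))
        \<le> (\<Prod>i\<in>I. if i \<in> J then root k ((1 - p) * f i (G \<inter> S' i) ^ k
              + p * f i (insert x G \<inter> S i) ^ k) else f i (G \<inter> S' i))"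
      using assms(3,4) insert.prems(3) insert_S
      by (intro holder_two_point_subfamily[OF assms(2) J assms(5)]) auto
    also have "\<dots> = (\<Prod>i\<in>I. f' i (G \<inter> S' i))"
      using insert_S by (intro prod.cong) (auto simp: f'_def)
    finally show "(1 - p) * (\<Prod>i\<in>I. f i (G \<inter> S i)) + p * (\<Prod>i\<in>I. f i (insert x G \<inter> S i))
        \<le> (\<Prod>i\<in>I. f' i (G \<inter> S' i))"
      using G_S by (simp cong: prod.cong)
  qed
  also have "\<dots> \<le> (\<Prod>i\<in>I. root k (rs_expect p (S' i) (\<lambda>H. f' i H ^ k)))"
  proof (rule insert.IH)
    show "S' i \<subseteq> X" if "i \<in> I" for i using insert.prems(1)[OF that] unfolding S'_def by auto
    show "card {i\<in>I. y \<in> S' i} = k" if "y \<in> X" for y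
    proof -
      have "{i\<in>I. y \<in> S' i} = {i\<in>I. y \<in> S i}" using that insert.hyps(2) unfolding S'_def by auto
      then show ?thesis using insert.prems(2)[of y] that by simp
    qed
    show "0 \<le> f' i H" if "i \<in> I" for i H
      unfolding f'_def using insert.prems(3)[OF that] assms(3,4) by (auto intro!: real_root_ge_zero)
  qed
  also have "\<dots> = (\<Prod>i\<in>I. root k (rs_expect p (S i) (\<lambda>H. f i H ^ k)))"
  proof (intro prod.cong refl)
    fix i assume i: "i \<in> I"
    have fin: "finite (S' i)"
      using insert.prems(1)[OF i] insert.hyps(1) unfolding S'_def by (auto intro: finite_subset)
    show "root k (rs_expect p (S' i) (\<lambda>H. f' i H ^ k)) = root k (rs_expect p (S i) (\<lambda>H. f i H ^ k))"
    proof (cases "i \<in> J")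
      case True
      have "rs_expect p (S' i) (\<lambda>H. f' i H ^ k)
          = rs_expect p (S' i) (\<lambda>H. (1 - p) * f i H ^ k + p * f i (insert x H) ^ k)"
        using True assms(3,4,5) insert.prems(3)[OF i] by (intro rs_expect_cong) (simp add: f'_def)
      also have "\<dots> = rs_expect p (insert x (S' i)) (\<lambda>H. f i H ^ k)"
        by (rule rs_expect_insert[symmetric, OF fin]) (simp add: S'_def)
      also have "insert x (S' i) = S i" using True unfolding J_def S'_def by auto
      finally show ?thesis by simp
    next
      case False
      then show ?thesis using i unfolding J_def S'_def f'_def by auto
    qed
  qed
  finally show ?case .
qed

lemma finite_rsets: "finite V \<Longrightarrow> finite (rsets r V)"
  unfolding rsets_def by simp

lemma card_rsets: "finite V \<Longrightarrow> card (rsets r V) = card V choose r"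
  unfolding rsets_def by (simp add: n_subsets)

lemma rsets_image:
  assumes "inj_on \<phi> D"
  shows "rsets r (\<phi> ` D) = image \<phi> ` rsets r D"
proof
  show "image \<phi> ` rsets r D \<subseteq> rsets r (\<phi> ` D)"
    unfolding rsets_def using assms by (auto simp: card_image inj_on_subset)
  show "rsets r (\<phi> ` D) \<subseteq> image \<phi> ` rsets r D"
  proof
    fix e assume "e \<in> rsets r (\<phi> ` D)"
    then have e: "e \<subseteq> \<phi> ` D" "card e = r" unfolding rsets_def by auto
    then obtain A where A: "A \<subseteq> D" "e = \<phi> ` A" by (meson subset_imageE)
    then have "card A = r" using e assms by (metis card_image inj_on_subset)
    then show "e \<in> image \<phi> ` rsets r D" using A unfolding rsets_def by auto
  qed
qed

lemma contains_inducedI: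
  assumes "(W, E) \<in> F" "inj_on f W" "f ` W \<subseteq> D"
    "\<And>S. S \<subseteq> W \<Longrightarrow> card S = r \<Longrightarrow> S \<in> E \<longleftrightarrow> f ` S \<in> G"
  shows "contains_induced r F D G"
proof -
  have "\<forall>S. S \<subseteq> W \<and> card S = r \<longrightarrow> (S \<in> E \<longleftrightarrow> f ` S \<in> {e\<in>G. e \<subseteq> D})"
    using assms(3,4) by blast
  then show ?thesis unfolding contains_induced_def using assms(1-3) by (auto simp: Bex_def)
qed

lemma contains_inducedE:
  assumes "contains_induced r F D G"
  obtains W E f where "(W, E) \<in> F" "inj_on f W" "f ` W \<subseteq> D"
    "\<And>S. S \<subseteq> W \<Longrightarrow> card S = r \<Longrightarrow> S \<in> E \<longleftrightarrow> f ` S \<in> G"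
proof -
  obtain W E f where WE: "(W, E) \<in> F" "inj_on f W" "f ` W \<subseteq> D"
    "\<forall>S. S \<subseteq> W \<and> card S = r \<longrightarrow> (S \<in> E \<longleftrightarrow> f ` S \<in> {e\<in>G. e \<subseteq> D})"
    using assms unfolding contains_induced_def by auto
  then show thesis by (intro that[OF WE(1-3)]) blast
qed

lemma contains_induced_cong:
  assumes "G \<inter> rsets r D = G' \<inter> rsets r D"
  shows "contains_induced r F D G \<longleftrightarrow> contains_induced r F D G'"
proof -
  have "contains_induced r F D G'"
    if G: "contains_induced r F D G" and eq: "G \<inter> rsets r D = G' \<inter> rsets r D" for G G'
  proof -
    obtain W E f where WE: "(W, E) \<in> F" "inj_on f W" "f ` W \<subseteq> D"
      "\<And>S. S \<subseteq> W \<Longrightarrow> card S = r \<Longrightarrow> S \<in> E \<longleftrightarrow> f ` S \<in> G"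
      using G by (rule contains_inducedE) blast
    have "f ` S \<in> rsets r D" if "S \<subseteq> W" "card S = r" for S
      using that WE(2,3) unfolding rsets_def by (auto simp: card_image inj_on_subset)
    then have "f ` S \<in> G \<longleftrightarrow> f ` S \<in> G'" if "S \<subseteq> W" "card S = r" for S
      using that eq by blast
    with WE show ?thesis by (intro contains_inducedI[OF WE(1-3)]) auto
  qed
  then show ?thesis using assms by metis
qed

lemma contains_induced_restrict:
  "contains_induced r F D (G \<inter> rsets r D) \<longleftrightarrow> contains_induced r F D G"
  by (intro contains_induced_cong) auto

lemma contains_induced_mono:
  assumes "contains_induced r F D' G" "D' \<subseteq> D"
  shows "contains_induced r F D G"
proof -
  obtain W E f where WE: "(W, E) \<in> F" "inj_on f W" "f ` W \<subseteq> D'"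
    "\<And>S. S \<subseteq> W \<Longrightarrow> card S = r \<Longrightarrow> S \<in> E \<longleftrightarrow> f ` S \<in> G"
    using assms(1) by (rule contains_inducedE) blast
  then show ?thesis using assms(2) by (intro contains_inducedI[OF WE(1,2)]) auto
qed

lemma contains_induced_image:
  assumes "inj_on \<phi> D" "H \<subseteq> Pow D" "contains_induced r F D H"
  shows "contains_induced r F (\<phi> ` D) (image \<phi> ` H)"
proof -
  obtain W E f where WE: "(W, E) \<in> F" "inj_on f W" "f ` W \<subseteq> D"
    "\<And>S. S \<subseteq> W \<Longrightarrow> card S = r \<Longrightarrow> S \<in> E \<longleftrightarrow> f ` S \<in> H"
    using assms(3) by (rule contains_inducedE) blast
  have "f ` S \<in> H \<longleftrightarrow> \<phi> ` f ` S \<in> image \<phi> ` H" if "S \<subseteq> W" for S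
  proof
    assume "\<phi> ` f ` S \<in> image \<phi> ` H"
    then obtain e where e: "e \<in> H" "\<phi> ` f ` S = \<phi> ` e" by blast
    have "f ` S = e"
      using e assms(1,2) WE(3) that by (subst (asm) inj_on_image_eq_iff[OF assms(1)]) auto
    then show "f ` S \<in> H" using e by simp
  qed auto
  then show ?thesis
    using WE assms(1) by (intro contains_inducedI[of W E F "\<phi> \<circ> f"])
      (auto simp: comp_inj_on inj_on_subset image_comp)
qed

lemma contains_induced_image_iff:
  assumes "inj_on \<phi> D" "H \<subseteq> Pow D"
  shows "contains_induced r F (\<phi> ` D) (image \<phi> ` H) \<longleftrightarrow> contains_induced r F D H"
proof
  define \<psi> where "\<psi> = inv_into D \<phi>"
  have inv: "\<psi> ` \<phi> ` e = e" if "e \<subseteq> D" for e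
    unfolding \<psi>_def using assms(1) that by simp
  assume "contains_induced r F (\<phi> ` D) (image \<phi> ` H)"
  then have "contains_induced r F (\<psi> ` \<phi> ` D) (image \<psi> ` image \<phi> ` H)"
  proof (rule contains_induced_image[rotated 2])
    show "inj_on \<psi> (\<phi> ` D)" unfolding \<psi>_def by (rule inj_on_inv_into) simp
    show "image \<phi> ` H \<subseteq> Pow (\<phi> ` D)" using assms(2) by auto
  qed
  moreover have "image \<psi> ` image \<phi> ` H = H"
    using inv assms(2) unfolding image_image by (simp add: subset_iff cong: image_cong)
  ultimately show "contains_induced r F D H" using inv[of D] by simp
qed (rule contains_induced_image[OF assms])

section \<open>The probability of being \<open>\<F>\<close>-free\<close>

definition free_prob :: "real \<Rightarrow> nat \<Rightarrow> (nat set \<times> nat set set) set \<Rightarrow> 'v set \<Rightarrow> real" where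
  "free_prob p r F D = rs_expect p (rsets r D) (\<lambda>H. if contains_induced r F D H then 0 else 1)"

lemma mu_eq_rs_expect:
  assumes "finite V"
  shows "mu p r V A = rs_expect p (rsets r V) (\<lambda>G. if G \<in> A then 1 else 0)"
proof -
  have "mu p r V A = (\<Sum>G\<in>Pow (rsets r V) \<inter> A. rs_weight p (rsets r V) G)"
    unfolding mu_def hyps_def rs_weight_def by (simp add: Int_commute)
  also have "\<dots> = rs_expect p (rsets r V) (\<lambda>G. if G \<in> A then 1 else 0)"
    unfolding rs_expect_def using assms finite_rsets
    by (subst sum.inter_restrict) (auto intro!: sum.cong)
  finally show ?thesis .
qed

lemma mu_free_eq_free_prob:
  fixes n :: nat
  shows "mu p r {..<n} {G \<in> hyps r {..<n}. \<not> contains_induced r F {..<n} G} = free_prob p r F {..<n}"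
proof -
  have "mu p r {..<n} {G \<in> hyps r {..<n}. \<not> contains_induced r F {..<n} G}
      = rs_expect p (rsets r {..<n})
          (\<lambda>G. if G \<in> {G \<in> hyps r {..<n}. \<not> contains_induced r F {..<n} G} then 1 else 0)"
    by (rule mu_eq_rs_expect) simp
  also have "\<dots> = free_prob p r F {..<n}"
    unfolding free_prob_def by (rule rs_expect_cong) (auto simp: hyps_def)
  finally show ?thesis .
qed

lemma free_prob_nonneg: "0 \<le> p \<Longrightarrow> p \<le> 1 \<Longrightarrow> 0 \<le> free_prob p r F D"
  unfolding free_prob_def by (intro rs_expect_nonneg) auto

lemma free_prob_le_1: "finite D \<Longrightarrow> 0 \<le> p \<Longrightarrow> p \<le> 1 \<Longrightarrow> free_prob p r F D \<le> 1"
  using rs_expect_mono[of p "rsets r D" "\<lambda>H. if contains_induced r F D H then 0 else 1" "\<lambda>_. 1"]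
  by (simp add: free_prob_def rs_expect_const finite_rsets)

lemma free_prob_image:
  assumes "inj_on \<phi> D" "finite D"
  shows "free_prob p r F (\<phi> ` D) = free_prob p r F D"
proof -
  have inj: "inj_on (image \<phi>) (rsets r D)"
    by (rule inj_on_subset[OF inj_on_image_Pow[OF assms(1)]]) (auto simp: rsets_def)
  have "free_prob p r F (\<phi> ` D)
      = rs_expect p (rsets r D) (\<lambda>H. if contains_induced r F (\<phi> ` D) (image \<phi> ` H) then 0 else 1)"
    unfolding free_prob_def rsets_image[OF assms(1)]
    using rs_expect_image[OF inj finite_rsets[OF assms(2)]] by simp
  also have "\<dots> = free_prob p r F D"
    unfolding free_prob_def
  proof (intro rs_expect_cong)
    fix H assume "H \<subseteq> rsets r D"
    then have "H \<subseteq> Pow D" unfolding rsets_def by auto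
    then show "(if contains_induced r F (\<phi> ` D) (image \<phi> ` H) then 0 else 1)
        = (if contains_induced r F D H then 0 else (1::real))"
      by (simp add: contains_induced_image_iff[OF assms(1)])
  qed
  finally show ?thesis .
qed

lemma free_prob_eq_card:
  assumes "finite D" "card D = m"
  shows "free_prob p r F D = free_prob p r F {..<m}"
proof -
  obtain h where "bij_betw h D {0..<m}" using ex_bij_betw_finite_nat[OF assms(1)] assms(2) by blast
  then have "h ` D = {..<m}" "inj_on h D" by (auto simp: bij_betw_def)
  then show ?thesis using free_prob_image[of h D p r F] assms(1) by simp
qed

lemma free_prob_ge_if_pos:
  assumes "finite D" "0 < p" "p < 1" "free_prob p r F D > 0"
  shows "free_prob p r F D \<ge> min p (1 - p) ^ (card D choose r)"
proof -
  define X where "X = rsets r D"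
  have X: "finite X" "card X = card D choose r"
    unfolding X_def using assms by (simp_all add: finite_rsets card_rsets)
  obtain G where G: "G \<subseteq> X" "\<not> contains_induced r F D G"
    using assms(4) unfolding free_prob_def rs_expect_def X_def[symmetric] by (force intro: ccontr)
  have "min p (1 - p) ^ (card D choose r)
      = min p (1 - p) ^ card G * min p (1 - p) ^ (card X - card G)"
    using G X card_mono[of X G] by (simp add: power_add[symmetric])
  also have "\<dots> \<le> rs_weight p X G"
    unfolding rs_weight_def using assms by (intro mult_mono power_mono) auto
  also have "\<dots> = rs_weight p X G * (if contains_induced r F D G then 0 else 1)" using G by simp
  also have "\<dots> \<le> (\<Sum>H\<in>Pow X. rs_weight p X H * (if contains_induced r F D H then 0 else 1))"
    using G X assms by (intro member_le_sum) (auto simp: rs_weight_nonneg)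
  also have "\<dots> = free_prob p r F D" unfolding free_prob_def rs_expect_def X_def ..
  finally show ?thesis .
qed

lemma free_prob_Suc_le:
  assumes "r \<le> n" "0 \<le> p" "p \<le> 1"
  shows "free_prob p r F {..<Suc n} \<le> root (Suc n - r) (free_prob p r F {..<n}) ^ Suc n"
proof -
  define I where "I = {..<Suc n}"
  define k where "k = Suc n - r"
  define S where "S v = rsets r (I - {v})" for v
  define f where "f v H = (if contains_induced r F (I - {v}) H then 0 else (1::real))" for v H
  have k: "k > 0" unfolding k_def using assms by simp
  have "free_prob p r F I \<le> rs_expect p (rsets r I) (\<lambda>G. \<Prod>v\<in>I. f v (G \<inter> S v))"
    unfolding free_prob_def
  proof (intro rs_expect_mono assms(2,3))
    fix G
    have "contains_induced r F I G" if "contains_induced r F (I - {v}) (G \<inter> S v)" for v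
      using that unfolding S_def contains_induced_restrict by (rule contains_induced_mono) auto
    then have "\<not> contains_induced r F I G \<Longrightarrow> (\<Prod>v\<in>I. f v (G \<inter> S v)) = 1"
      unfolding f_def by (metis (mono_tags, lifting) prod.neutral)
    then show "(if contains_induced r F I G then 0 else 1) \<le> (\<Prod>v\<in>I. f v (G \<inter> S v))"
      unfolding f_def by (auto simp: prod_nonneg)
  qed
  also have "\<dots> \<le> (\<Prod>v\<in>I. root k (rs_expect p (S v) (\<lambda>H. f v H ^ k)))"
  proof (rule rs_expect_prod_le_finner[OF finite_rsets _ assms(2,3) k])
    show "S v \<subseteq> rsets r I" for v unfolding S_def rsets_def by auto
    show "card {v\<in>I. e \<in> S v} = k" if "e \<in> rsets r I" for e
    proof -
      have "{v\<in>I. e \<in> S v} = I - e" using that unfolding S_def rsets_def by auto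
      then show ?thesis
        using that unfolding I_def k_def rsets_def by (auto simp: card_Diff_subset finite_subset)
    qed
  qed (auto simp: I_def f_def)
  also have "\<dots> = (\<Prod>v\<in>I. root k (free_prob p r F {..<n}))"
  proof (intro prod.cong refl)
    fix v assume "v \<in> I"
    then have "free_prob p r F (I - {v}) = free_prob p r F {..<n}"
      unfolding I_def by (intro free_prob_eq_card) auto
    moreover have "rs_expect p (S v) (\<lambda>H. f v H ^ k) = free_prob p r F (I - {v})"
      unfolding free_prob_def S_def f_def using k by (intro rs_expect_cong) simp
    ultimately show "root k (rs_expect p (S v) (\<lambda>H. f v H ^ k)) = root k (free_prob p r F {..<n})"
      by simp
  qed
  finally show ?thesis unfolding I_def k_def by simp
qed

lemma contains_induced_if_free_prob_zero:
  assumes "finite D" "0 < p" "p < 1" "free_prob p r F D = 0"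
  shows "contains_induced r F D G"
proof -
  define X where "X = rsets r D"
  have "finite X" unfolding X_def using assms by (simp add: finite_rsets)
  then have "\<forall>H\<in>Pow X. rs_weight p X H * (if contains_induced r F D H then 0 else 1) = 0"
    using assms unfolding free_prob_def rs_expect_def X_def[symmetric]
    by (subst (asm) sum_nonneg_eq_0_iff) (auto simp: rs_weight_nonneg)
  then have "contains_induced r F D (G \<inter> X)"
    using rs_weight_pos[OF assms(2,3), of X "G \<inter> X"] by (auto split: if_splits)
  then show ?thesis unfolding X_def contains_induced_restrict .
qed

definition free_rate :: "real \<Rightarrow> nat \<Rightarrow> (nat set \<times> nat set set) set \<Rightarrow> nat \<Rightarrow> real" where
  "free_rate p r F n = - log 2 (free_prob p r F {..<n}) / real (n choose r)"

lemma cconst_eq_lim_free_rate: "cconst p r F = lim (free_rate p r F)"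
  unfolding cconst_def mu_free_eq_free_prob free_rate_def ..

lemma free_rate_bounds:
  assumes "0 < p" "p < 1" "free_prob p r F {..<n} > 0"
  shows "0 \<le> free_rate p r F n" "free_rate p r F n \<le> - log 2 (min p (1 - p))"
proof -
  define q where "q = free_prob p r F {..<n}"
  define N where "N = real (n choose r)"
  have q: "0 < q" "q \<le> 1" unfolding q_def using assms by (auto intro: free_prob_le_1)
  then show "0 \<le> free_rate p r F n"
    unfolding free_rate_def q_def[symmetric] by (simp add: divide_nonpos_nonneg)
  have "log 2 (min p (1 - p)) < 0" using assms by simp
  moreover have "N * log 2 (min p (1 - p)) \<le> log 2 q"
    using free_prob_ge_if_pos[of "{..<n}" p r F] assms q
    by (simp add: q_def N_def log_nat_power[symmetric])
  moreover have "N \<ge> 0" unfolding N_def by simp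
  ultimately show "free_rate p r F n \<le> - log 2 (min p (1 - p))"
    unfolding free_rate_def q_def[symmetric] N_def[symmetric]
    by (cases "N = 0") (simp_all add: le_divide_eq mult.commute)
qed

lemma free_rate_le_Suc:
  assumes "0 < p" "p < 1" "r \<le> n" "free_prob p r F {..<n} > 0" "free_prob p r F {..<Suc n} > 0"
  shows "free_rate p r F n \<le> free_rate p r F (Suc n)"
proof -
  define a where "a = free_prob p r F {..<n}"
  define b where "b = free_prob p r F {..<Suc n}"
  define k where "k = Suc n - r"
  have k: "real k > 0" unfolding k_def using assms by simp
  have ab: "a > 0" "b > 0" using assms a_def b_def by auto
  have binom: "real k * real (Suc n choose r) = real (Suc n) * real (n choose r)"
  proof -
    have "k * (Suc n choose r) = Suc n * (n choose r)"
      using binomial_absorb_comp[of "Suc n" r] unfolding k_def by simp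
    then show ?thesis by (metis of_nat_mult)
  qed
  have "log 2 b \<le> log 2 (root k a ^ Suc n)"
    using free_prob_Suc_le[of r n p F] assms ab k unfolding a_def b_def k_def by simp
  also have "\<dots> = real (Suc n) * log 2 (root k a)"
    using ab k by (intro log_nat_power real_root_gt_zero) simp_all
  also have "\<dots> = real (Suc n) * log 2 a / k" using ab k by (simp add: log_root)
  finally have ineq: "real (Suc n) * (- log 2 a) \<le> real k * (- log 2 b)"
    using k by (simp add: field_simps)
  have "free_rate p r F n = real (Suc n) * (- log 2 a) / (real (Suc n) * real (n choose r))"
    unfolding free_rate_def a_def by simp
  also have "\<dots> = real (Suc n) * (- log 2 a) / (real k * real (Suc n choose r))"
    unfolding binom ..
  also have "\<dots> \<le> real k * (- log 2 b) / (real k * real (Suc n choose r))"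
    using ineq by (rule divide_right_mono) simp
  also have "\<dots> = free_rate p r F (Suc n)"
    unfolding free_rate_def b_def using k by simp
  finally show ?thesis .
qed

lemma free_rate_tendsto_cconst:
  assumes "0 < p" "p < 1" "\<And>n::nat. free_prob p r F {..<n} > 0"
  shows "free_rate p r F \<longlonglongrightarrow> cconst p r F"
proof -
  have mono: "free_rate p r F m \<le> free_rate p r F n" if "r \<le> m" "m \<le> n" for m n
    using that(2,1)
  proof (induction n rule: dec_induct)
    case (step n)
    then have "free_rate p r F n \<le> free_rate p r F (Suc n)"
      by (intro free_rate_le_Suc assms) simp
    with step show ?case by simp
  qed simp
  have "Bseq (\<lambda>n. free_rate p r F (n + r))"
    using free_rate_bounds[OF assms(1,2) assms(3)] by (intro BseqI'[where K="- log 2 (min p (1 - p))"]) simp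
  then have "convergent (free_rate p r F)"
    using Bseq_monoseq_convergent'_inc mono by blast
  then show ?thesis by (simp add: convergent_LIMSEQ_iff cconst_eq_lim_free_rate)
qed

lemma mu_nonneg: "0 \<le> p \<Longrightarrow> p \<le> 1 \<Longrightarrow> 0 \<le> mu p r V A"
  unfolding mu_def by (intro sum_nonneg) simp

lemma mu_filter:
  assumes "finite V"
  shows "mu p r V {G\<in>A. P G}
    = (\<Sum>G\<in>A \<inter> hyps r V. if P G then rs_weight p (rsets r V) G else 0)"
proof -
  have "finite (A \<inter> hyps r V)" using assms by (simp add: hyps_def finite_rsets)
  moreover have "{G\<in>A. P G} \<inter> hyps r V = {G \<in> A \<inter> hyps r V. P G}" by auto
  ultimately show ?thesis unfolding mu_def rs_weight_def by (simp only: sum.inter_filter)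
qed

lemma mu_split:
  assumes "finite V"
  shows "mu p r V A = mu p r V {G\<in>A. P G} + mu p r V {G\<in>A. \<not> P G}"
  unfolding mu_filter[OF assms] sum.distrib[symmetric] unfolding mu_def rs_weight_def
  by (intro sum.cong) auto

lemma mu_mono: "finite V \<Longrightarrow> 0 \<le> p \<Longrightarrow> p \<le> 1 \<Longrightarrow> A \<subseteq> B \<Longrightarrow> mu p r V A \<le> mu p r V B"
  unfolding mu_def by (intro sum_mono2) (auto simp: hyps_def finite_rsets)

lemma mu_le_sum_cover:
  assumes "finite V" "finite \<T>" "0 \<le> p" "p \<le> 1" "A \<subseteq> (\<Union>T\<in>\<T>. B T)"
  shows "mu p r V A \<le> (\<Sum>T\<in>\<T>. mu p r V (B T))"
  unfolding mu_eq_rs_expect[OF assms(1)] rs_expect_sum[OF assms(2), symmetric]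
proof (intro rs_expect_mono assms(3,4))
  fix G
  have "(\<Sum>T\<in>\<T>. if G \<in> B T then 1 else 0) \<ge> (1::real)" if "G \<in> B T" "T \<in> \<T>" for T
    using member_le_sum[OF that(2), of "\<lambda>T. if G \<in> B T then 1 else (0::real)"] that assms(2)
    by simp
  then show "(if G \<in> A then 1 else 0) \<le> (\<Sum>T\<in>\<T>. if G \<in> B T then 1 else (0::real))"
    using assms(5) by (auto intro: sum_nonneg)
qed

lemma mu_card_ge_le_sum:
  assumes "finite V" "finite \<D>" "0 \<le> p" "p \<le> 1"
  shows "real s * mu p r V {G\<in>A. s \<le> card {D\<in>\<D>. P D G}} \<le> (\<Sum>D\<in>\<D>. mu p r V {G\<in>A. P D G})"
proof -
  define w where "w = rs_weight p (rsets r V)"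
  define H where "H = A \<inter> hyps r V"
  have w: "0 \<le> w G" for G unfolding w_def using assms(3,4) by (rule rs_weight_nonneg)
  have "real s * mu p r V {G\<in>A. s \<le> card {D\<in>\<D>. P D G}}
      = (\<Sum>G\<in>H. if s \<le> card {D\<in>\<D>. P D G} then real s * w G else 0)"
    unfolding mu_filter[OF assms(1)] H_def w_def sum_distrib_left by (intro sum.cong) auto
  also have "\<dots> \<le> (\<Sum>G\<in>H. w G * real (card {D\<in>\<D>. P D G}))"
    using w by (intro sum_mono) (auto simp: mult.commute[of "real s"] intro!: mult_left_mono)
  also have "\<dots> = (\<Sum>G\<in>H. \<Sum>D\<in>\<D>. if P D G then w G else 0)"
    using assms(2) by (simp add: sum.If_cases Int_def mult.commute)
  also have "\<dots> = (\<Sum>D\<in>\<D>. mu p r V {G\<in>A. P D G})"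
    unfolding mu_filter[OF assms(1)] H_def w_def by (rule sum.swap)
  finally show ?thesis .
qed

lemma partial_steiner_subset_card:
  "partial_steiner r m V \<D> \<Longrightarrow> D \<in> \<D> \<Longrightarrow> D \<subseteq> V \<and> card D = m"
  unfolding partial_steiner_def by blast

lemma partial_steiner_finite: "finite V \<Longrightarrow> partial_steiner r m V \<D> \<Longrightarrow> finite \<D>"
proof -
  assume "finite V" "partial_steiner r m V \<D>"
  then have "\<D> \<subseteq> Pow V" unfolding partial_steiner_def by auto
  then show "finite \<D>" using \<open>finite V\<close> finite_subset by blast
qed

lemma partial_steiner_rsets_disjoint:
  assumes "finite V" "partial_steiner r m V \<D>" "D1 \<in> \<D>" "D2 \<in> \<D>" "D1 \<noteq> D2"
  shows "rsets r D1 \<inter> rsets r D2 = {}"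
proof (rule ccontr)
  assume "rsets r D1 \<inter> rsets r D2 \<noteq> {}"
  then obtain e where e: "e \<subseteq> D1" "e \<subseteq> D2" "card e = r" unfolding rsets_def by auto
  then have "e \<in> rsets r V" using partial_steiner_subset_card[OF assms(2,3)] unfolding rsets_def by auto
  then have "card {D\<in>\<D>. e \<subseteq> D} \<le> 1" using assms(2) unfolding partial_steiner_def by auto
  moreover have "{D1, D2} \<subseteq> {D\<in>\<D>. e \<subseteq> D}" using e assms(3,4) by auto
  then have "card {D1, D2} \<le> card {D\<in>\<D>. e \<subseteq> D}"
    using partial_steiner_finite[OF assms(1,2)] by (intro card_mono) auto
  ultimately show False using assms(5) by simp
qed

lemma partial_steiner_card_mult_le:
  assumes "finite V" "partial_steiner r m V \<D>"
  shows "card \<D> * (m choose r) \<le> card V choose r"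
proof -
  have D: "finite \<D>" "\<And>D. D \<in> \<D> \<Longrightarrow> D \<subseteq> V \<and> card D = m"
    using partial_steiner_finite[OF assms] partial_steiner_subset_card[OF assms(2)] by auto
  have "(\<Sum>D\<in>\<D>. card (rsets r D)) = (\<Sum>D\<in>\<D>. m choose r)"
    using D assms(1) by (intro sum.cong refl) (metis card_rsets finite_subset)
  then have "card \<D> * (m choose r) = (\<Sum>D\<in>\<D>. card (rsets r D))" by simp
  also have "\<dots> = card (\<Union>D\<in>\<D>. rsets r D)"
  proof (rule card_UN_disjoint[symmetric, OF D(1)])
    show "\<forall>D\<in>\<D>. finite (rsets r D)" using D assms(1) by (metis finite_rsets finite_subset)
    show "\<forall>D1\<in>\<D>. \<forall>D2\<in>\<D>. D1 \<noteq> D2 \<longrightarrow> rsets r D1 \<inter> rsets r D2 = {}"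
      using partial_steiner_rsets_disjoint[OF assms] by blast
  qed
  also have "\<dots> \<le> card (rsets r V)"
    using D assms(1) by (intro card_mono finite_rsets) (auto simp: rsets_def)
  finally show ?thesis using card_rsets[OF assms(1)] by simp
qed

lemma mu_free_on_blocks:
  assumes "finite V" "partial_steiner r m V \<D>" "T \<subseteq> \<D>"
  shows "mu p r V {G \<in> hyps r V. \<forall>D\<in>T. \<not> contains_induced r F D G} = free_prob p r F {..<m} ^ card T"
proof -
  define h where "h D H = (if contains_induced r F D H then 0 else (1::real))" for D :: "'a set" and H
  have T: "finite T" "\<And>D. D \<in> T \<Longrightarrow> D \<subseteq> V \<and> card D = m"
    using assms(3) partial_steiner_finite[OF assms(1,2)] finite_subset
      partial_steiner_subset_card[OF assms(2)] by blast+
  have "mu p r V {G \<in> hyps r V. \<forall>D\<in>T. \<not> contains_induced r F D G}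
      = rs_expect p (rsets r V) (\<lambda>G. \<Prod>D\<in>T. h D (G \<inter> rsets r D))"
    unfolding mu_eq_rs_expect[OF assms(1)]
  proof (intro rs_expect_cong)
    fix G assume "G \<subseteq> rsets r V"
    moreover have "h D (G \<inter> rsets r D) = (if contains_induced r F D G then 0 else 1)" for D
      by (simp add: h_def contains_induced_restrict)
    ultimately show "(if G \<in> {G \<in> hyps r V. \<forall>D\<in>T. \<not> contains_induced r F D G} then 1 else 0)
        = (\<Prod>D\<in>T. h D (G \<inter> rsets r D))"
      using T(1) by (cases "\<forall>D\<in>T. \<not> contains_induced r F D G") (auto simp: hyps_def prod_zero_iff)
  qed
  also have "\<dots> = (\<Prod>D\<in>T. rs_expect p (rsets r D) (h D))"
  proof (rule rs_expect_prod_disjoint[OF T(1) finite_rsets[OF assms(1)]])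
    show "rsets r D \<subseteq> rsets r V" if "D \<in> T" for D using T(2)[OF that] by (auto simp: rsets_def)
    show "rsets r D1 \<inter> rsets r D2 = {}" if "D1 \<in> T" "D2 \<in> T" "D1 \<noteq> D2" for D1 D2
      using partial_steiner_rsets_disjoint[OF assms(1,2)] that assms(3) by blast
  qed
  also have "\<dots> = (\<Prod>D\<in>T. free_prob p r F {..<m})"
  proof (intro prod.cong refl)
    fix D assume "D \<in> T"
    then have "free_prob p r F D = free_prob p r F {..<m}"
      using T(2) assms(1) by (intro free_prob_eq_card) (auto intro: finite_subset)
    then show "rs_expect p (rsets r D) (h D) = free_prob p r F {..<m}"
      unfolding free_prob_def h_def .
  qed
  finally show ?thesis using T by simp
qed

lemma mu_many_free_blocks_le:
  assumes "finite V" "partial_steiner r m V \<D>" "0 \<le> p" "p \<le> 1"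
  shows "mu p r V {G \<in> hyps r V. t \<le> card {D\<in>\<D>. \<not> contains_induced r F D G}}
    \<le> 2 ^ card \<D> * free_prob p r F {..<m} ^ t"
proof -
  define \<T> where "\<T> = {T. T \<subseteq> \<D> \<and> card T = t}"
  have D: "finite \<D>" using partial_steiner_finite[OF assms(1,2)] .
  have "{G \<in> hyps r V. t \<le> card {D\<in>\<D>. \<not> contains_induced r F D G}}
      \<subseteq> (\<Union>T\<in>\<T>. {G \<in> hyps r V. \<forall>D\<in>T. \<not> contains_induced r F D G})"
  proof
    fix G assume "G \<in> {G \<in> hyps r V. t \<le> card {D\<in>\<D>. \<not> contains_induced r F D G}}"
    then have "G \<in> hyps r V" "t \<le> card {D\<in>\<D>. \<not> contains_induced r F D G}" by auto
    moreover obtain T where "T \<subseteq> {D\<in>\<D>. \<not> contains_induced r F D G}" "card T = t"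
      using obtain_subset_with_card_n[OF calculation(2)] by blast
    ultimately show "G \<in> (\<Union>T\<in>\<T>. {G \<in> hyps r V. \<forall>D\<in>T. \<not> contains_induced r F D G})"
      unfolding \<T>_def by blast
  qed
  then have "mu p r V {G \<in> hyps r V. t \<le> card {D\<in>\<D>. \<not> contains_induced r F D G}}
      \<le> (\<Sum>T\<in>\<T>. mu p r V {G \<in> hyps r V. \<forall>D\<in>T. \<not> contains_induced r F D G})"
    using D assms by (intro mu_le_sum_cover) (auto simp: \<T>_def)
  also have "\<dots> = real (card \<T>) * free_prob p r F {..<m} ^ t"
    using assms(1,2) by (simp add: mu_free_on_blocks \<T>_def)
  also have "\<dots> \<le> 2 ^ card \<D> * free_prob p r F {..<m} ^ t"
  proof (rule mult_right_mono)
    have "card \<T> \<le> card (Pow \<D>)" unfolding \<T>_def using D by (intro card_mono) auto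
    then show "real (card \<T>) \<le> 2 ^ card \<D>" using D by (simp add: card_Pow)
  qed (simp add: free_prob_nonneg assms)
  finally show ?thesis .
qed

section \<open>Few dense blocks force a small measure\<close>

lemma sum_le_card_ge_threshold:
  fixes f :: "'a \<Rightarrow> real"
  assumes "finite S" "0 \<le> \<gamma>" "0 \<le> W" "\<And>x. x \<in> S \<Longrightarrow> f x \<le> W"
  shows "(\<Sum>x\<in>S. f x) \<le> real (card {x\<in>S. f x \<ge> \<gamma> * W}) * W + \<gamma> * real (card S) * W"
proof -
  define L where "L = {x\<in>S. f x \<ge> \<gamma> * W}"
  have "(\<Sum>x\<in>S. f x) = (\<Sum>x\<in>L. f x) + (\<Sum>x\<in>S - L. f x)"
    using assms(1) by (simp add: L_def sum.subset_diff[of L S])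
  also have "\<dots> \<le> (\<Sum>x\<in>L. W) + (\<Sum>x\<in>S - L. \<gamma> * W)"
    by (intro add_mono sum_mono) (auto simp: L_def assms(4))
  also have "(\<Sum>x\<in>S - L. \<gamma> * W) \<le> \<gamma> * real (card S) * W"
  proof -
    have "card (S - L) \<le> card S" using assms(1) by (simp add: card_mono)
    then have "real (card (S - L)) * (\<gamma> * W) \<le> real (card S) * (\<gamma> * W)"
      using assms(2,3) by (intro mult_right_mono) auto
    then show ?thesis by (simp add: algebra_simps)
  qed
  finally show ?thesis by (simp add: L_def)
qed

text \<open>The part of \<open>A\<close> with at least \<open>t\<close> \<open>\<F>\<close>-free blocks is bounded by the union bound. On the
  rest more than \<open>|\<D>| - t\<close> blocks contain a copy, so by the first moment bound it carries at most
  half of the measure of \<open>A\<close> unless many blocks are dense.\<close>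

lemma mu_le_if_few_dense_blocks:
  assumes "finite V" "A \<subseteq> hyps r V" "partial_steiner r m V \<D>" "0 \<le> p" "p \<le> 1" "0 \<le> \<gamma>"
    "t \<le> card \<D>"
    "2 * (real (card {D\<in>\<D>. mu p r V {G\<in>A. contains_induced r F D G} \<ge> \<gamma> * mu p r V A})
      + \<gamma> * card \<D>) \<le> real (card \<D>) - real t + 1"
  shows "mu p r V A \<le> 2 * (2 ^ card \<D> * free_prob p r F {..<m} ^ t)"
proof -
  define W where "W = mu p r V A"
  define s where "s = card \<D> - t + 1"
  define free where "free G = card {D\<in>\<D>. \<not> contains_induced r F D G}" for G
  define copies where "copies G = card {D\<in>\<D>. contains_induced r F D G}" for G
  have D: "finite \<D>" using partial_steiner_finite[OF assms(1,3)] .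
  have W: "0 \<le> W" unfolding W_def using assms(4,5) by (rule mu_nonneg)
  have s: "real s = real (card \<D>) - real t + 1" "s > 0" unfolding s_def using assms(7) by auto
  have card_split: "copies G + free G = card \<D>" for G
    unfolding copies_def free_def using D by (subst card_Un_disjoint[symmetric]) (auto intro: arg_cong[where f=card])
  have "\<not> t \<le> free G \<longleftrightarrow> s \<le> copies G" for G
    using card_split[of G] assms(7) unfolding s_def by linarith
  then have bad: "{G\<in>A. \<not> t \<le> free G} = {G\<in>A. s \<le> copies G}" by simp
  have "mu p r V {G\<in>A. t \<le> free G} \<le> mu p r V {G \<in> hyps r V. t \<le> free G}"
    using assms by (intro mu_mono) auto
  also have "\<dots> \<le> 2 ^ card \<D> * free_prob p r F {..<m} ^ t"
    unfolding free_def using assms(1,3-5) by (rule mu_many_free_blocks_le)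
  finally have good_part: "mu p r V {G\<in>A. t \<le> free G} \<le> 2 ^ card \<D> * free_prob p r F {..<m} ^ t" .
  have "real s * mu p r V {G\<in>A. s \<le> copies G}
      \<le> (\<Sum>D\<in>\<D>. mu p r V {G\<in>A. contains_induced r F D G})"
    unfolding copies_def using assms(1,4,5) D by (intro mu_card_ge_le_sum)
  also have "\<dots> \<le> real (card {D\<in>\<D>. mu p r V {G\<in>A. contains_induced r F D G} \<ge> \<gamma> * W}) * W
      + \<gamma> * real (card \<D>) * W"
    using D assms W unfolding W_def by (intro sum_le_card_ge_threshold mu_mono) auto
  also have "\<dots> \<le> real s * W / 2"
  proof -
    have "2 * (real (card {D\<in>\<D>. mu p r V {G\<in>A. contains_induced r F D G} \<ge> \<gamma> * W})
        + \<gamma> * card \<D>) * W \<le> real s * W"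
      using assms(8) s(1) W unfolding W_def by (intro mult_right_mono) auto
    then show ?thesis by (simp add: field_simps)
  qed
  finally have "mu p r V {G\<in>A. \<not> t \<le> free G} \<le> W / 2"
    unfolding bad using s by (simp add: mult.commute pos_le_divide_eq mult_le_cancel_left_pos)
  then show ?thesis
    using good_part mu_split[OF assms(1), of p r A "\<lambda>G. t \<le> free G"] unfolding W_def by linarith
qed

section \<open>Choice of the parameters\<close>

lemma real_div_le_choose:
  assumes "1 \<le> r" "r \<le> m"
  shows "real m / real r \<le> real (m choose r)"
proof -
  have "1 \<le> real m / real r" using assms by simp
  then have "real m / real r \<le> (real m / real r) ^ r" using assms(1) by (intro self_le_power) auto
  also have "\<dots> \<le> real (m choose r)" using binomial_ge_n_over_k_pow_k[OF assms(2)] by simp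
  finally show ?thesis .
qed

text \<open>The numerical heart of the argument, with \<open>N = (n choose r)\<close>, \<open>M = (m choose r)\<close>,
  \<open>d = |\<D>|\<close>, \<open>c\<^sub>m\<close> the rate at \<open>m\<close> and \<open>B\<close> an upper bound for it: the exponent
  \<open>1 + d - (1 - \<delta>) d c\<^sub>m M\<close> coming from the union bound is at most \<open>(-c + 3\<epsilon>/4) N\<close>.\<close>

lemma union_bound_exponent_less:
  fixes c cm \<epsilon> B \<delta> N M d :: real
  assumes "\<epsilon> > 0" "0 \<le> cm" "cm \<le> B" "\<delta> = \<epsilon> / (8 * (B + 1 + \<epsilon>))" "c - \<epsilon>/4 < cm"
    "M \<ge> 8/\<epsilon>" "N \<ge> 8/\<epsilon>" "d * M \<le> N" "d \<ge> (1 - \<delta>) * N / M"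
  shows "1 + d - (1 - \<delta>) * d * (cm * M) < (-c + \<epsilon>) * N"
proof -
  have "0 < 8 / \<epsilon>" using assms(1) by simp
  then have MN: "M > 0" "N > 0" using assms(6,7) by linarith+
  have "0 \<le> B" using assms(2,3) by linarith
  then have B: "0 \<le> B" "8 * (B + 1 + \<epsilon>) > 0" using assms(1) by simp_all
  have \<delta>: "0 < \<delta>" "\<delta> \<le> 1/8"
  proof -
    show "0 < \<delta>" unfolding assms(4) using B assms(1) by simp
    have "\<epsilon> \<le> 1/8 * (8 * (B + 1 + \<epsilon>))" using B by simp
    then show "\<delta> \<le> 1/8" unfolding assms(4) using B by (simp only: pos_divide_le_eq)
  qed
  have "2 * \<delta> * B = (\<epsilon> / 4) * (B / (B + 1 + \<epsilon>))" using assms(1,4) B by (simp add: field_simps)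
  also have "\<dots> \<le> \<epsilon> / 4" using assms(1) B by (intro mult_left_le) auto
  finally have \<delta>B: "2 * \<delta> * B \<le> \<epsilon> / 4" .
  have "0 \<le> (1 - \<delta>) * N / M" using \<delta> MN by simp
  then have d0: "0 \<le> d" using assms(9) by linarith
  have "d * 8 = \<epsilon> * (d * (8 / \<epsilon>))" using assms(1) by simp
  also have "\<dots> \<le> \<epsilon> * (d * M)" using d0 assms(1,6) by (intro mult_left_mono) auto
  also have "\<dots> \<le> \<epsilon> * N" using assms(1,8) by (intro mult_left_mono) auto
  finally have d: "d \<le> \<epsilon> * N / 8" by simp
  have dM: "(1 - \<delta>) * N \<le> d * M" using assms(9) MN by (simp add: field_simps)
  have "(1 - \<delta>) * d * (cm * M) = ((1 - \<delta>) * cm) * (d * M)" by (simp add: algebra_simps)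
  also have "\<dots> \<ge> ((1 - \<delta>) * cm) * ((1 - \<delta>) * N)"
    using dM \<delta> assms(2) by (intro mult_left_mono) auto
  finally have "(1 - \<delta>) * d * (cm * M) \<ge> (1 - \<delta>)\<^sup>2 * (cm * N)"
    by (simp add: power2_eq_square algebra_simps)
  moreover have "(1 - \<delta>)\<^sup>2 * (cm * N) \<ge> (1 - 2 * \<delta>) * (cm * N)"
    using assms(2) MN by (intro mult_right_mono) (auto simp: power2_eq_square algebra_simps)
  moreover have "2 * \<delta> * cm \<le> 2 * \<delta> * B" using \<delta> assms(3) by simp
  then have "2 * \<delta> * cm * N \<le> (\<epsilon> / 4) * N"
    using \<delta>B MN by (intro mult_right_mono) auto
  moreover have "(c - \<epsilon>/4) * N \<le> cm * N" using assms(5) MN by simp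
  moreover have "1 \<le> \<epsilon> * N / 8" using assms(1,7) by (simp add: field_simps)
  ultimately have "1 + d - (1 - \<delta>) * d * (cm * M) \<le> (-c + 3 * \<epsilon> / 4) * N"
    using d by (simp add: algebra_simps)
  also have "\<dots> < (-c + \<epsilon>) * N" using MN assms(1) by simp
  finally show ?thesis .
qed

lemma log_le_union_bound:
  assumes "W \<le> 2 * (2 ^ d * q ^ t)" "0 < W" "0 < q" "q \<le> 1" "x \<le> real t"
  shows "log 2 W \<le> 1 + real d + x * log 2 q"
proof -
  have "log 2 W \<le> log 2 (2 * (2 ^ d * q ^ t))" using assms(1-3) by simp
  also have "\<dots> = 1 + real d + t * log 2 q" using assms(3) by (simp add: log_mult log_nat_power)
  also have "\<dots> \<le> 1 + real d + x * log 2 q"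
    using assms(3-5) by (intro add_left_mono mult_right_mono_neg) auto
  finally show ?thesis .
qed

lemma card_dense_blocks_ge:
  fixes V :: "'a set"
  assumes "0 < p" "p < 1" "\<epsilon> > 0" "free_prob p r F {..<m} > 0"
    "c - \<epsilon>/4 < free_rate p r F m" "free_rate p r F m \<le> B" "\<delta> = \<epsilon> / (8 * (B + 1 + \<epsilon>))"
    "real (m choose r) \<ge> 8/\<epsilon>" "real (card V choose r) \<ge> 8/\<epsilon>"
    "finite V" "A \<subseteq> hyps r V" "mu p r V A > 2 powr ((- c + \<epsilon>) * real (card V choose r))"
    "partial_steiner r m V \<D>" "real (card \<D>) \<ge> (1 - \<delta>) * real (card V choose r) / real (m choose r)"
  shows "real (card {D\<in>\<D>. mu p r V {G\<in>A. contains_induced r F D G} \<ge> \<delta>/4 * mu p r V A})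
    \<ge> \<delta>/4 * real (card \<D>)"
proof (rule ccontr)
  define d where "d = card \<D>"
  define q where "q = free_prob p r F {..<m}"
  define M where "M = real (m choose r)"
  define N where "N = real (card V choose r)"
  assume "\<not> ?thesis"
  then have few: "real (card {D\<in>\<D>. mu p r V {G\<in>A. contains_induced r F D G} \<ge> \<delta>/4 * mu p r V A})
      < \<delta>/4 * real d" unfolding d_def by simp
  have rate: "0 \<le> free_rate p r F m" using free_rate_bounds assms(1,2,4) by blast
  have "0 < 8 / \<epsilon>" using assms(3) by simp
  then have "M > 0" unfolding M_def using assms(8) by linarith
  then have q: "0 < q" "q \<le> 1" "log 2 q = - free_rate p r F m * M"
    using assms(1,2,4) unfolding q_def M_def free_rate_def by (auto intro: free_prob_le_1)
  have "0 \<le> B" using assms(6) rate by linarith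
  then have B: "0 < B + 1 + \<epsilon>" "\<epsilon> \<le> 8 * (B + 1 + \<epsilon>)" using assms(3) by simp_all
  then have \<delta>: "0 < \<delta>" "\<delta> \<le> 1"
    using assms(3) unfolding assms(7) by (simp_all add: divide_le_eq)
  define t where "t = nat \<lceil>(1 - \<delta>) * d\<rceil>"
  have "(1 - \<delta>) * d \<le> d" using \<delta> by (intro mult_left_le_one_le) auto
  then have t: "(1 - \<delta>) * d \<le> t" "t < (1 - \<delta>) * d + 1" "t \<le> d"
    using \<delta> ceiling_correct[of "(1 - \<delta>) * d"] unfolding t_def
    by (auto simp: ceiling_le_iff nat_le_iff)
  have "2 * (real (card {D\<in>\<D>. mu p r V {G\<in>A. contains_induced r F D G} \<ge> \<delta>/4 * mu p r V A})
      + \<delta>/4 * d) \<le> real d - real t + 1"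
    using few t(2) by (simp add: algebra_simps)
  then have "mu p r V A \<le> 2 * (2 ^ d * q ^ t)"
    unfolding d_def q_def using assms(1,2,10,11,13) \<delta> t(3)
    by (intro mu_le_if_few_dense_blocks[where \<gamma>="\<delta>/4"]) (auto simp: d_def)
  moreover have W: "0 < mu p r V A"
    using assms(12) powr_gt_zero[of 2 "(- c + \<epsilon>) * real (card V choose r)"] by linarith
  ultimately have "log 2 (mu p r V A) \<le> 1 + real d + (1 - \<delta>) * d * log 2 q"
    using q(1,2) t(1) by (rule log_le_union_bound)
  also have "\<dots> = 1 + real d - (1 - \<delta>) * d * (free_rate p r F m * M)"
    using q(3) by simp
  also have "\<dots> < (- c + \<epsilon>) * N"
    unfolding M_def N_def d_def using assms rate partial_steiner_card_mult_le[OF assms(10,13)]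
    by (intro union_bound_exponent_less) (auto simp flip: of_nat_mult)
  also have "\<dots> < log 2 (mu p r V A)"
    using assms(12) W unfolding N_def by (simp add: less_log_iff)
  finally have "log 2 (mu p r V A) < log 2 (mu p r V A)" .
  then show False by simp
qed

definition many_dense_blocks ::
    "real \<Rightarrow> nat \<Rightarrow> (nat set \<times> nat set set) set \<Rightarrow> real \<Rightarrow> real \<Rightarrow> real \<Rightarrow> real \<Rightarrow> nat \<Rightarrow> nat \<Rightarrow> bool"
  where "many_dense_blocks p r F \<epsilon> \<eta> \<gamma> lam m n0 \<longleftrightarrow>
    (\<forall>(V :: nat set) n A \<D>.
       finite V \<longrightarrow> card V = n \<longrightarrow> n > n0 \<longrightarrow> A \<subseteq> hyps r V \<longrightarrow>
       mu p r V A > 2 powr ((- cconst p r F + \<epsilon>) * real (n choose r)) \<longrightarrow>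
       partial_steiner r m V \<D> \<longrightarrow>
       real (card \<D>) \<ge> (1 - lam) * real (n choose r) / real (m choose r) \<longrightarrow>
       real (card {D \<in> \<D>. mu p r V {G \<in> A. contains_induced r F D G} \<ge> \<gamma> * mu p r V A})
         \<ge> \<eta> * real (card \<D>))"

lemma many_dense_blocks_if_free_prob_zero:
  assumes "0 < p" "p < 1" "free_prob p r F {..<m} = 0"
  shows "many_dense_blocks p r F \<epsilon> (1/2) (1/2) (1/2) m 0"
  unfolding many_dense_blocks_def
proof (intro allI impI)
  fix V :: "nat set" and n A \<D>
  assume V: "finite V" and \<D>: "partial_steiner r m V \<D>"
  have "contains_induced r F D G" if "D \<in> \<D>" for D G
  proof (rule contains_induced_if_free_prob_zero[OF _ assms(1,2)])
    show "finite D" using partial_steiner_subset_card[OF \<D> that] V finite_subset by blast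
    then show "free_prob p r F D = 0"
      using free_prob_eq_card partial_steiner_subset_card[OF \<D> that] assms(3) by metis
  qed
  then have "{D \<in> \<D>. mu p r V {G \<in> A. contains_induced r F D G} \<ge> 1/2 * mu p r V A} = \<D>"
    using mu_nonneg[of p r V A] assms(1,2) by auto
  then show "real (card {D \<in> \<D>. mu p r V {G \<in> A. contains_induced r F D G} \<ge> 1/2 * mu p r V A})
      \<ge> 1/2 * real (card \<D>)" by simp
qed

lemma many_dense_blocks_if_free_prob_pos:
  assumes "1 \<le> r" "0 < p" "p < 1" "\<epsilon> > 0" "\<And>n::nat. free_prob p r F {..<n} > 0"
  obtains \<delta> m n0 where "\<delta> > 0" "many_dense_blocks p r F \<epsilon> (\<delta>/4) (\<delta>/4) \<delta> m n0"
proof -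
  define c where "c = cconst p r F"
  define B where "B = - log 2 (min p (1 - p))"
  define \<delta> where "\<delta> = \<epsilon> / (8 * (B + 1 + \<epsilon>))"
  define n0 where "n0 = nat \<lceil>8 * real r / \<epsilon>\<rceil> + r"
  have "B \<ge> 0" unfolding B_def using assms(2,3) by simp
  then have "\<delta> > 0" unfolding \<delta>_def using assms(4) by simp
  have large: "real (n choose r) \<ge> 8 / \<epsilon>" if "n0 \<le> n" for n
  proof -
    have "8 * real r / \<epsilon> \<le> real n" using that unfolding n0_def by linarith
    then have "8 / \<epsilon> \<le> real n / real r" using assms(1,4) by (simp add: field_simps)
    also have "\<dots> \<le> real (n choose r)" using that assms(1) unfolding n0_def by (intro real_div_le_choose) auto
    finally show ?thesis .
  qed
  have "\<forall>\<^sub>F m in sequentially. c - \<epsilon>/4 < free_rate p r F m"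
    using order_tendstoD(1)[OF free_rate_tendsto_cconst[OF assms(2,3,5)], of "c - \<epsilon>/4"] assms(4)
    unfolding c_def by simp
  then obtain m0 where "c - \<epsilon>/4 < free_rate p r F m" if "m0 \<le> m" for m
    unfolding eventually_sequentially by blast
  then obtain m where m: "c - \<epsilon>/4 < free_rate p r F m" "n0 \<le> m"
    by (meson le_add1 le_add2)
  have rate: "free_rate p r F m \<le> B" unfolding B_def using free_rate_bounds[OF assms(2,3,5)] by blast
  have "many_dense_blocks p r F \<epsilon> (\<delta>/4) (\<delta>/4) \<delta> m n0"
    unfolding many_dense_blocks_def
  proof (intro allI impI)
    fix V :: "nat set" and n A \<D>
    assume V: "finite V" "card V = n" "n > n0" "A \<subseteq> hyps r V"
      and A: "mu p r V A > 2 powr ((- cconst p r F + \<epsilon>) * real (n choose r))"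
      and \<D>: "partial_steiner r m V \<D>" "real (card \<D>) \<ge> (1 - \<delta>) * real (n choose r) / real (m choose r)"
    show "real (card {D \<in> \<D>. mu p r V {G \<in> A. contains_induced r F D G} \<ge> \<delta>/4 * mu p r V A})
        \<ge> \<delta>/4 * real (card \<D>)"
    proof (rule card_dense_blocks_ge[OF assms(2,3,4,5) m(1) rate \<delta>_def large[OF m(2)] _ V(1,4) _ \<D>(1)])
      show "8 / \<epsilon> \<le> real (card V choose r)" using large[of n] V(2,3) by simp
      show "2 powr ((- c + \<epsilon>) * real (card V choose r)) < mu p r V A" using A V(2) by (simp add: c_def)
      show "(1 - \<delta>) * real (card V choose r) / real (m choose r) \<le> real (card \<D>)" using \<D>(2) V(2) by simp
    qed
  qed
  with \<open>\<delta> > 0\<close> show ?thesis by (rule that)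
qed

theorem lemma5:
  fixes r :: nat and F :: "(nat set \<times> nat set set) set" and p \<epsilon> :: real
  assumes "r \<ge> 2" and "wf_family r F" and "0 < p" and "p < 1" and "\<epsilon> > 0"
  shows "\<exists>\<eta> \<gamma> lam :: real. \<eta> > 0 \<and> \<gamma> > 0 \<and> lam > 0 \<and>
    (\<exists>m n0 :: nat. \<forall>(V :: nat set) n A \<D>.
       finite V \<longrightarrow> card V = n \<longrightarrow> n > n0 \<longrightarrow> A \<subseteq> hyps r V \<longrightarrow>
       mu p r V A > 2 powr ((- cconst p r F + \<epsilon>) * real (n choose r)) \<longrightarrow>
       partial_steiner r m V \<D> \<longrightarrow>
       real (card \<D>) \<ge> (1 - lam) * real (n choose r) / real (m choose r) \<longrightarrow>
       real (card {D \<in> \<D>. mu p r V {G \<in> A. contains_induced r F D G} \<ge> \<gamma> * mu p r V A})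
         \<ge> \<eta> * real (card \<D>))"
proof -
  have "\<exists>\<eta> \<gamma> lam m n0. \<eta> > 0 \<and> \<gamma> > 0 \<and> lam > 0 \<and> many_dense_blocks p r F \<epsilon> \<eta> \<gamma> lam m n0"
  proof (cases "\<exists>m::nat. free_prob p r F {..<m} = 0")
    case True
    then obtain m :: nat where "free_prob p r F {..<m} = 0" by blast
    then have "many_dense_blocks p r F \<epsilon> (1/2) (1/2) (1/2) m 0"
      using assms(3,4) by (rule many_dense_blocks_if_free_prob_zero[rotated 2])
    then show ?thesis by (intro exI[of _ "1/2"] exI[of _ m] exI[of _ 0]) simp
  next
    case False
    have "0 \<le> free_prob p r F {..<n}" for n :: nat using assms(3,4) by (intro free_prob_nonneg) auto
    with False have "free_prob p r F {..<n} > 0" for n :: nat by (simp add: order_less_le)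
    moreover have "1 \<le> r" using assms(1) by simp
    ultimately obtain \<delta> m n0 where "\<delta> > 0" "many_dense_blocks p r F \<epsilon> (\<delta>/4) (\<delta>/4) \<delta> m n0"
      using many_dense_blocks_if_free_prob_pos assms(3-5) by metis
    then show ?thesis by (intro exI[of _ "\<delta>/4"] exI[of _ \<delta>] exI[of _ m] exI[of _ n0]) simp
  qed
  then show ?thesis unfolding many_dense_blocks_def by blast
qed

end
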